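(* Let $k\geq 1$ be a fixed integer, $p=\frac{\log n+(k+1)\log\log n-\log\log\log n}{n}$, $G=G(n,p)$ and $D=\frac{\log n}{\log\log n}$. For a fixed $t\in\mathbb{N}$ and a fixed $0<\alpha<1$, almost surely there does not exist a subset $S\subset V(G)$ with $|S|\leq \alpha tD$ and $e[S]\geq |S|+t$.
   Context: $\log$ is the natural logarithm; $G(n,p)$ is the binomial random graph on $n$ vertices, $n\to\infty$; "almost surely" means with probability tending to $1$; $e[S]$ denotes the number of edges of the subgraph of $G$ induced by $S$. *)

theory Defs
  imports Complex_Main
begin

definition all_edges :: "nat \<Rightarrow> nat set set" where
  "all_edges n = {e. \<exists>i j. i < j \<and> j < n \<and> e = {i, j}}"

text \<open>Probability that the binomial random graph G(n,p) (edge set E) satisfies property P: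
  each of the n choose 2 possible edges is present independently with probability p.\<close>
definition Gnp_prob :: "nat \<Rightarrow> real \<Rightarrow> (nat set set \<Rightarrow> bool) \<Rightarrow> real" where
  "Gnp_prob n p P =
     (\<Sum>E\<in>Pow (all_edges n). if P E
        then p ^ card E * (1 - p) ^ (card (all_edges n) - card E) else 0)"

definition induced_edges :: "nat set set \<Rightarrow> nat set \<Rightarrow> nat" where
  "induced_edges E S = card {e \<in> E. e \<subseteq> S}"

end

theory Submission
  imports Defs "HOL-Real_Asymp.Real_Asymp"
begin

text \<open>First moment method. If some \<open>S\<close> with \<open>|S| = s \<le> \<alpha>tD\<close> spans \<open>s + t\<close> edges, then
  \<open>G\<close> contains one of at most \<open>C(n,s) C(s^2, s+t)\<close> edge sets of size \<open>s + t\<close>, each present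
  with probability \<open>p^(s+t)\<close>, and this expected count is at most \<open>(e^2 np)^s (ps)^t\<close>. Summing
  over \<open>s \<le> \<alpha>tD\<close> bounds the probability by \<open>(D + 1) (e^2 np)^(\<alpha>tD) (p\<alpha>tD)^t\<close>. Since
  \<open>np = \<Theta>(log n)\<close>, the middle factor is \<open>n^(\<alpha>t(1 + o(1)))\<close> while the last one is \<open>n^(-t)\<close>
  up to a polylogarithmic factor, so \<open>\<alpha> < 1\<close> makes the bound vanish.\<close>

lemma sum_Pow_power_card:
  fixes p q :: "'a::comm_semiring_1"
  assumes "finite A"
  shows "(\<Sum>E\<in>Pow A. p ^ card E * q ^ (card A - card E)) = (p + q) ^ card A"
proof -
  have "(p + q) ^ card A = (\<Sum>E\<in>Pow A. p ^ card E * q ^ card (A - E))"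
    using prod_add[OF assms, of "\<lambda>_. p" "\<lambda>_. q"] by simp
  also have "\<dots> = (\<Sum>E\<in>Pow A. p ^ card E * q ^ (card A - card E))"
    using assms by (intro sum.cong) (auto simp: card_Diff_subset finite_subset)
  finally show ?thesis ..
qed

lemma sum_Pow_supersets_power_card:
  fixes p q :: "'a::comm_semiring_1" and A F :: "'b set"
  assumes "finite A" "F \<subseteq> A"
  shows "(\<Sum>E\<in>Pow A. if F \<subseteq> E then p ^ card E * q ^ (card A - card E) else 0)
       = p ^ card F * (p + q) ^ (card A - card F)"
proof -
  define w where "w E = p ^ card E * q ^ (card A - card E)" for E :: "'b set"
  have finF: "finite F" using assms finite_subset by blast
  have "(\<Sum>E\<in>Pow A. if F \<subseteq> E then p ^ card E * q ^ (card A - card E) else 0)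
      = (\<Sum>E\<in>{E\<in>Pow A. F \<subseteq> E}. w E)"
    using assms(1) by (simp add: w_def sum.inter_filter[symmetric])
  also have "\<dots> = (\<Sum>E\<in>Pow (A - F). w (F \<union> E))"
    by (rule sum.reindex_bij_witness[where j = "\<lambda>E. E - F" and i = "\<lambda>E. F \<union> E"])
      (use assms in \<open>auto simp: Un_absorb1\<close>)
  also have "\<dots> = (\<Sum>E\<in>Pow (A - F). p ^ card F * (p ^ card E * q ^ (card (A - F) - card E)))"
  proof (rule sum.cong)
    fix E assume "E \<in> Pow (A - F)"
    then have "card (F \<union> E) = card F + card E"
      using assms(1) finF by (intro card_Un_disjoint) (auto intro: finite_subset)
    then show "w (F \<union> E) = p ^ card F * (p ^ card E * q ^ (card (A - F) - card E))"
      using assms finF by (simp add: w_def card_Diff_subset power_add algebra_simps)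
  qed simp
  also have "\<dots> = p ^ card F * (p + q) ^ card (A - F)"
    using assms(1) by (simp only: sum_distrib_left[symmetric] sum_Pow_power_card finite_Diff)
  finally show ?thesis
    using assms finF by (simp add: card_Diff_subset)
qed

lemma finite_all_edges: "finite (all_edges n)"
  by (rule finite_subset[of _ "Pow {0..<n}"]) (auto simp: all_edges_def)

lemma Gnp_prob_nonneg: "0 \<le> p \<Longrightarrow> p \<le> 1 \<Longrightarrow> 0 \<le> Gnp_prob n p P"
  unfolding Gnp_prob_def by (intro sum_nonneg) auto

lemma Gnp_prob_mono:
  assumes "0 \<le> p" "p \<le> 1" "\<And>E. E \<subseteq> all_edges n \<Longrightarrow> P E \<Longrightarrow> Q E"
  shows "Gnp_prob n p P \<le> Gnp_prob n p Q"
  unfolding Gnp_prob_def using assms by (intro sum_mono) auto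

lemma Gnp_prob_Bex_le_sum:
  assumes "finite I" "0 \<le> p" "p \<le> 1"
  shows "Gnp_prob n p (\<lambda>E. \<exists>i\<in>I. P i E) \<le> (\<Sum>i\<in>I. Gnp_prob n p (P i))"
proof -
  define w where "w E = p ^ card E * (1 - p) ^ (card (all_edges n) - card E)" for E :: "nat set set"
  have w_nonneg: "0 \<le> w E" for E
    unfolding w_def using assms by simp
  have "(if \<exists>i\<in>I. P i E then w E else 0) \<le> (\<Sum>i\<in>I. if P i E then w E else 0)" for E
  proof (cases "\<exists>i\<in>I. P i E")
    case True
    then obtain i where "i \<in> I" "P i E" by blast
    then show ?thesis
      using member_le_sum[of i I "\<lambda>i. if P i E then w E else 0"] assms(1) w_nonneg by auto
  qed (simp add: w_nonneg sum_nonneg)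
  then have "Gnp_prob n p (\<lambda>E. \<exists>i\<in>I. P i E)
      \<le> (\<Sum>E\<in>Pow (all_edges n). \<Sum>i\<in>I. if P i E then w E else 0)"
    unfolding Gnp_prob_def w_def[symmetric] by (rule sum_mono)
  also have "\<dots> = (\<Sum>i\<in>I. Gnp_prob n p (P i))"
    unfolding Gnp_prob_def w_def by (rule sum.swap)
  finally show ?thesis .
qed

lemma Gnp_prob_contains:
  "F \<subseteq> all_edges n \<Longrightarrow> Gnp_prob n p (\<lambda>E. F \<subseteq> E) = p ^ card F"
  unfolding Gnp_prob_def by (simp add: sum_Pow_supersets_power_card finite_all_edges)

lemma card_all_edges_within_le: "finite S \<Longrightarrow> card {e\<in>all_edges n. e \<subseteq> S} \<le> card S ^ 2"
proof -
  assume "finite S"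
  have "{e\<in>all_edges n. e \<subseteq> S} \<subseteq> (\<lambda>(i, j). {i, j}) ` (S \<times> S)"
    unfolding all_edges_def by auto
  then have "card {e\<in>all_edges n. e \<subseteq> S} \<le> card ((\<lambda>(i, j). {i, j}) ` (S \<times> S))"
    using \<open>finite S\<close> by (intro card_mono) auto
  also have "\<dots> \<le> card (S \<times> S)"
    by (rule card_image_le) (use \<open>finite S\<close> in auto)
  finally show ?thesis by (simp add: card_cartesian_product power2_eq_square)
qed

lemma Gnp_prob_induced_edges_ge:
  assumes "0 \<le> p" "p \<le> 1" "finite S"
  shows "Gnp_prob n p (\<lambda>E. m \<le> induced_edges E S) \<le> real (card S ^ 2 choose m) * p ^ m"
proof -
  define A where "A = {e\<in>all_edges n. e \<subseteq> S}"
  define FF where "FF = {F. F \<subseteq> A \<and> card F = m}"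
  have finA: "finite A" unfolding A_def using finite_all_edges by simp
  have finFF: "finite FF"
    by (rule finite_subset[of _ "Pow A"]) (auto simp: FF_def finA)
  have "Gnp_prob n p (\<lambda>E. m \<le> induced_edges E S) \<le> Gnp_prob n p (\<lambda>E. \<exists>F\<in>FF. F \<subseteq> E)"
  proof (rule Gnp_prob_mono[OF assms(1,2)])
    fix E assume "E \<subseteq> all_edges n" "m \<le> induced_edges E S"
    moreover obtain F where "F \<subseteq> {e \<in> E. e \<subseteq> S}" "card F = m"
      using \<open>m \<le> induced_edges E S\<close> unfolding induced_edges_def
      by (rule obtain_subset_with_card_n)
    ultimately have "F \<in> FF" "F \<subseteq> E" unfolding FF_def A_def by auto
    then show "\<exists>F\<in>FF. F \<subseteq> E" ..
  qed
  also have "\<dots> \<le> (\<Sum>F\<in>FF. Gnp_prob n p (\<lambda>E. F \<subseteq> E))"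
    by (rule Gnp_prob_Bex_le_sum) (use assms finFF in auto)
  also have "\<dots> = (\<Sum>F\<in>FF. p ^ m)"
  proof (rule sum.cong)
    fix F assume "F \<in> FF"
    then have "F \<subseteq> all_edges n" "card F = m" by (auto simp: FF_def A_def)
    then show "Gnp_prob n p (\<lambda>E. F \<subseteq> E) = p ^ m" by (simp add: Gnp_prob_contains)
  qed simp
  also have "\<dots> = real (card A choose m) * p ^ m"
    using finA by (simp add: FF_def n_subsets)
  also have "\<dots> \<le> real (card S ^ 2 choose m) * p ^ m"
    using card_all_edges_within_le[OF assms(3), of n] assms(1)
    by (intro mult_right_mono of_nat_mono binomial_right_mono) (simp_all add: A_def)
  finally show ?thesis .
qed

lemma Gnp_prob_some_set_induced_edges_ge:
  assumes "0 \<le> p" "p \<le> 1"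
  shows "Gnp_prob n p (\<lambda>E. \<exists>S. S \<subseteq> {0..<n} \<and> card S = s \<and> m \<le> induced_edges E S)
       \<le> real (n choose s) * real (s ^ 2 choose m) * p ^ m"
proof -
  define SS where "SS = {S. S \<subseteq> {0..<n} \<and> card S = s}"
  have finSS: "finite SS"
    by (rule finite_subset[of _ "Pow {0..<n}"]) (auto simp: SS_def)
  have "Gnp_prob n p (\<lambda>E. \<exists>S. S \<subseteq> {0..<n} \<and> card S = s \<and> m \<le> induced_edges E S)
      \<le> Gnp_prob n p (\<lambda>E. \<exists>S\<in>SS. m \<le> induced_edges E S)"
    by (rule Gnp_prob_mono[OF assms]) (auto simp: SS_def)
  also have "\<dots> \<le> (\<Sum>S\<in>SS. Gnp_prob n p (\<lambda>E. m \<le> induced_edges E S))"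
    by (rule Gnp_prob_Bex_le_sum) (use assms finSS in auto)
  also have "\<dots> \<le> (\<Sum>S\<in>SS. real (s ^ 2 choose m) * p ^ m)"
  proof (rule sum_mono)
    fix S assume "S \<in> SS"
    then have "finite S" "card S = s" by (auto simp: SS_def intro: finite_subset)
    then show "Gnp_prob n p (\<lambda>E. m \<le> induced_edges E S) \<le> real (s ^ 2 choose m) * p ^ m"
      using Gnp_prob_induced_edges_ge[OF assms] by blast
  qed
  also have "\<dots> = real (n choose s) * real (s ^ 2 choose m) * p ^ m"
    by (simp add: SS_def n_subsets)
  finally show ?thesis .
qed

definition has_dense_set :: "nat \<Rightarrow> nat \<Rightarrow> real \<Rightarrow> nat set set \<Rightarrow> bool" where
  "has_dense_set n t B E \<longleftrightarrow>
     (\<exists>S. S \<subseteq> {0..<n} \<and> real (card S) \<le> B \<and> card S + t \<le> induced_edges E S)"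

lemma Gnp_prob_dense_set_le_sum:
  assumes "0 \<le> p" "p \<le> 1"
  shows "Gnp_prob n p (has_dense_set n t B)
       \<le> (\<Sum>s\<le>nat \<lfloor>B\<rfloor>. real (n choose s) * real (s ^ 2 choose (s + t)) * p ^ (s + t))"
proof -
  have "Gnp_prob n p (has_dense_set n t B)
      \<le> Gnp_prob n p (\<lambda>E. \<exists>s\<in>{..nat \<lfloor>B\<rfloor>}.
            \<exists>S. S \<subseteq> {0..<n} \<and> card S = s \<and> s + t \<le> induced_edges E S)"
  proof (rule Gnp_prob_mono[OF assms])
    fix E assume "has_dense_set n t B E"
    then obtain S where S: "S \<subseteq> {0..<n}" "real (card S) \<le> B" "card S + t \<le> induced_edges E S"
      unfolding has_dense_set_def by blast
    then have "card S \<in> {..nat \<lfloor>B\<rfloor>}" using le_nat_floor by simp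
    with S show "\<exists>s\<in>{..nat \<lfloor>B\<rfloor>}. \<exists>S. S \<subseteq> {0..<n} \<and> card S = s \<and> s + t \<le> induced_edges E S"
      by blast
  qed
  also have "\<dots> \<le> (\<Sum>s\<le>nat \<lfloor>B\<rfloor>.
      Gnp_prob n p (\<lambda>E. \<exists>S. S \<subseteq> {0..<n} \<and> card S = s \<and> s + t \<le> induced_edges E S))"
    by (rule Gnp_prob_Bex_le_sum) (use assms in auto)
  also have "\<dots> \<le> (\<Sum>s\<le>nat \<lfloor>B\<rfloor>. real (n choose s) * real (s ^ 2 choose (s + t)) * p ^ (s + t))"
    by (intro sum_mono Gnp_prob_some_set_induced_edges_ge assms)
  finally show ?thesis .
qed

lemma binomial_le_pow_div_fact: "real (n choose k) \<le> real n ^ k / fact k"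
proof -
  have "real (n choose k) * fact k \<le> real n ^ k"
    using of_nat_mono[OF binomial_fact_pow[of n k]] by simp
  then show ?thesis by (simp add: field_simps)
qed

lemma power_div_fact_le_exp:
  fixes x :: real
  assumes "0 \<le> x"
  shows "x ^ n / fact n \<le> exp x"
proof -
  have exp: "(\<lambda>k. x ^ k / fact k) sums exp x"
    using exp_converges[of x] by (simp add: divide_inverse_commute)
  have "(\<Sum>k\<in>{n}. x ^ k / fact k) \<le> (\<Sum>k. x ^ k / fact k)"
    by (rule sum_le_suminf) (use exp assms in \<open>auto simp: sums_iff\<close>)
  then show ?thesis using exp by (simp add: sums_iff)
qed

lemma first_moment_term_le:
  fixes p :: real
  assumes "0 \<le> p"
  shows "real (n choose s) * real (s ^ 2 choose (s + t)) * p ^ (s + t)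
       \<le> (exp 2 * n * p) ^ s * (p * s) ^ t"
proof -
  have "real (n choose s) * real (s ^ 2 choose (s + t)) * p ^ (s + t)
     \<le> (real n ^ s / fact s) * (real (s ^ 2) ^ (s + t) / fact (s + t)) * p ^ (s + t)"
    using binomial_le_pow_div_fact[of n s] binomial_le_pow_div_fact[of "s ^ 2" "s + t"] assms
    by (intro mult_mono mult_right_mono) auto
  also have "\<dots> = real n ^ s * (real s ^ s / fact s) * (real s ^ (s + t) / fact (s + t))
      * real s ^ t * p ^ s * p ^ t"
  proof -
    have "2 * (s + t) = s + (s + t) + t" by simp
    then have "real (s ^ 2) ^ (s + t) = real s ^ (s + (s + t) + t)"
      by (metis of_nat_power power_mult)
    then show ?thesis by (simp add: power_add)
  qed
  also have "\<dots> \<le> real n ^ s * exp s * exp s * real s ^ t * p ^ s * p ^ t"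
    using power_div_fact_le_exp[of "real s" s] power_div_fact_le_exp[of "real s" "s + t"] assms
    by (intro mult_mono mult_right_mono mult_left_mono) auto
  also have "\<dots> = (exp 2 * n * p) ^ s * (p * s) ^ t"
  proof -
    have "exp (real s) * exp (real s) = exp 2 ^ s"
      by (simp add: exp_add[symmetric] exp_of_nat_mult[symmetric])
    then show ?thesis by (simp add: algebra_simps)
  qed
  finally show ?thesis .
qed

lemma Gnp_prob_dense_set_le:
  assumes "0 \<le> p" "p \<le> 1" "1 \<le> exp 2 * n * p" "0 \<le> B"
  shows "Gnp_prob n p (has_dense_set n t B)
       \<le> (B + 1) * exp (B * ln (exp 2 * n * p)) * (p * B) ^ t"
proof -
  define c where "c = exp 2 * n * p"
  define b where "b = nat \<lfloor>B\<rfloor>"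
  have "1 \<le> c" unfolding c_def using assms(3) .
  have "real b \<le> B" unfolding b_def using assms(4) by simp
  have term_le: "c ^ s * (p * s) ^ t \<le> exp (B * ln c) * (p * B) ^ t" if "s \<le> b" for s
  proof (rule mult_mono)
    have "c ^ s = c powr s" using \<open>1 \<le> c\<close> by (simp add: powr_realpow)
    also have "\<dots> \<le> c powr B"
      using \<open>1 \<le> c\<close> \<open>s \<le> b\<close> \<open>real b \<le> B\<close> by (intro powr_mono) auto
    finally show "c ^ s \<le> exp (B * ln c)"
      using \<open>1 \<le> c\<close> by (simp add: powr_def mult.commute)
    show "(p * s) ^ t \<le> (p * B) ^ t"
      using assms(1) \<open>s \<le> b\<close> \<open>real b \<le> B\<close> by (intro power_mono mult_left_mono) auto
  qed (use assms(1) in auto)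
  have "Gnp_prob n p (has_dense_set n t B)
      \<le> (\<Sum>s\<le>b. c ^ s * (p * s) ^ t)"
    using Gnp_prob_dense_set_le_sum[OF assms(1,2)] first_moment_term_le[OF assms(1)]
    unfolding b_def c_def by (meson order_trans sum_mono)
  also have "\<dots> \<le> real (card {..b}) * (exp (B * ln c) * (p * B) ^ t)"
    by (rule sum_bounded_above) (simp add: term_le)
  also have "\<dots> \<le> (B + 1) * (exp (B * ln c) * (p * B) ^ t)"
    using \<open>real b \<le> B\<close> assms(1,4) by (intro mult_right_mono) auto
  finally show ?thesis by (simp add: c_def mult.assoc)
qed

definition threshold_prob :: "nat \<Rightarrow> nat \<Rightarrow> real" where
  "threshold_prob k n =
     (ln (real n) + (real k + 1) * ln (ln (real n)) - ln (ln (ln (real n)))) / real n"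

definition ln_over_ln_ln :: "nat \<Rightarrow> real" where
  "ln_over_ln_ln n = ln (real n) / ln (ln (real n))"

lemma threshold_prob_eventually_bounds:
  "\<forall>\<^sub>F n in sequentially. 0 \<le> threshold_prob k n \<and> threshold_prob k n \<le> 1
     \<and> 1 \<le> exp 2 * n * threshold_prob k n \<and> 0 \<le> ln_over_ln_ln n"
proof -
  have "threshold_prob k \<longlonglongrightarrow> 0"
    unfolding threshold_prob_def by real_asymp
  moreover have "filterlim (\<lambda>n. exp 2 * n * threshold_prob k n) at_top sequentially"
    unfolding threshold_prob_def by real_asymp
  moreover have "filterlim ln_over_ln_ln at_top sequentially"
    unfolding ln_over_ln_ln_def by real_asymp
  ultimately have "\<forall>\<^sub>F n in sequentially. threshold_prob k n < 1
      \<and> 1 \<le> exp 2 * n * threshold_prob k n \<and> 0 \<le> ln_over_ln_ln n"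
    by (intro eventually_conj order_tendstoD(2)) (auto simp: filterlim_at_top)
  then show ?thesis
  proof eventually_elim
    case (elim n)
    have "0 \<le> exp 2 * real n" by simp
    with elim show ?case
      by (smt (verit) mult_nonneg_nonpos)
  qed
qed

lemma exp_mult_power_le_powr:
  fixes n :: nat and p B c \<gamma> :: real
  assumes "0 < n" "0 \<le> p" "0 \<le> B" "B * ln c \<le> real t * ln (real n) * \<gamma>"
    and "real n powr \<gamma> * p * B \<le> 1" "1 \<le> t"
  shows "(B + 1) * exp (B * ln c) * (p * B) ^ t \<le> (B + 1) * (real n powr \<gamma> * p * B)"
proof -
  have "exp (B * ln c) \<le> (real n powr \<gamma>) ^ t"
    using assms(1,4) by (simp add: powr_def exp_of_nat_mult[symmetric] algebra_simps)
  then have "(B + 1) * exp (B * ln c) * (p * B) ^ t \<le> (B + 1) * ((real n powr \<gamma>) ^ t * (p * B) ^ t)"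
    using assms(2,3) by (simp add: mult.assoc mult_left_mono mult_right_mono)
  also have "\<dots> = (B + 1) * (real n powr \<gamma> * p * B) ^ t"
    by (simp add: power_mult_distrib mult.assoc)
  also have "\<dots> \<le> (B + 1) * (real n powr \<gamma> * p * B)"
    using power_decreasing[of 1 t "real n powr \<gamma> * p * B"] assms(2,3,5,6)
    by (intro mult_left_mono) auto
  finally show ?thesis .
qed

lemma dense_set_bound_tendsto_0:
  fixes k t :: nat and \<alpha> :: real
  defines "p \<equiv> threshold_prob k" and "B \<equiv> \<lambda>n. \<alpha> * real t * ln_over_ln_ln n"
  assumes t: "t \<ge> 1" and \<alpha>: "0 < \<alpha>" "\<alpha> < 1"
  shows "(\<lambda>n. (B n + 1) * exp (B n * ln (exp 2 * n * p n)) * (p n * B n) ^ t) \<longlonglongrightarrow> 0"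
proof -
  \<comment> \<open>any \<open>\<gamma>\<close> strictly between \<open>\<alpha>\<close> and \<open>1\<close> absorbs the \<open>1 + o(1)\<close> in the exponent of \<open>(e^2np)^B\<close>\<close>
  define \<gamma> where "\<gamma> = (1 + \<alpha>) / 2"
  define x where "x n = real n powr \<gamma> * p n * B n" for n
  have "\<gamma> < 1" "\<alpha> < \<gamma>" using \<alpha> by (auto simp: \<gamma>_def)
  have "(\<lambda>n. \<alpha> * (ln (exp 2 * n * p n) / ln (ln (real n)))) \<longlonglongrightarrow> \<alpha> * 1"
    unfolding p_def threshold_prob_def by (intro tendsto_mult_left) real_asymp
  moreover have "\<alpha> * 1 < \<gamma>" using \<open>\<alpha> < \<gamma>\<close> by simp
  ultimately have "\<forall>\<^sub>F n in sequentially. \<alpha> * (ln (exp 2 * n * p n) / ln (ln (real n))) < \<gamma>"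
    by (rule order_tendstoD(2))
  then have ev_exponent:
    "\<forall>\<^sub>F n in sequentially. \<alpha> * (ln (exp 2 * n * p n) / ln (ln (real n))) \<le> \<gamma>"
    by (rule eventually_mono) (rule less_imp_le)
  have "x \<longlonglongrightarrow> 0"
    using \<open>\<gamma> < 1\<close> unfolding x_def p_def B_def threshold_prob_def ln_over_ln_ln_def by real_asymp
  moreover have "(0::real) < 1" by simp
  ultimately have ev_x: "\<forall>\<^sub>F n in sequentially. x n < 1"
    by (rule order_tendstoD(2))
  have "filterlim (\<lambda>n. ln (real n)) at_top sequentially"
       "filterlim (\<lambda>n. ln (ln (real n))) at_top sequentially"
    by real_asymp+
  then have ev_ln: "\<forall>\<^sub>F n in sequentially. 1 \<le> ln (real n) \<and> 1 \<le> ln (ln (real n))"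
    unfolding filterlim_at_top by (intro eventually_conj) auto
  have lim: "(\<lambda>n. (B n + 1) * x n) \<longlonglongrightarrow> 0"
    using \<open>\<gamma> < 1\<close> unfolding x_def p_def B_def threshold_prob_def ln_over_ln_ln_def by real_asymp
  have "\<forall>\<^sub>F n in sequentially. 0 \<le> (B n + 1) * exp (B n * ln (exp 2 * n * p n)) * (p n * B n) ^ t
      \<and> (B n + 1) * exp (B n * ln (exp 2 * n * p n)) * (p n * B n) ^ t \<le> (B n + 1) * x n"
    using threshold_prob_eventually_bounds[of k] ev_exponent ev_x ev_ln
  proof eventually_elim
    case (elim n)
    have "0 \<le> p n" using elim(1) by (simp add: p_def)
    have "0 \<le> B n" using \<alpha> elim(1) by (simp add: B_def)
    have "0 < ln (real n)" "0 < n"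
      using elim(4) by (auto intro: gr0I)
    have "B n * ln (exp 2 * n * p n)
        = real t * ln (real n) * (\<alpha> * (ln (exp 2 * n * p n) / ln (ln (real n))))"
      by (simp add: B_def ln_over_ln_ln_def)
    also have "\<dots> \<le> real t * ln (real n) * \<gamma>"
      using elim(2) \<open>0 < ln (real n)\<close> by (intro mult_left_mono) auto
    finally have "(B n + 1) * exp (B n * ln (exp 2 * n * p n)) * (p n * B n) ^ t \<le> (B n + 1) * x n"
      unfolding x_def using \<open>0 < n\<close> \<open>0 \<le> p n\<close> \<open>0 \<le> B n\<close> elim(3) t
      by (intro exp_mult_power_le_powr) (simp_all add: x_def)
    then show ?case
      using \<open>0 \<le> p n\<close> \<open>0 \<le> B n\<close> by simp
  qed
  then show ?thesis
    by (intro tendsto_sandwich[OF _ _ tendsto_const lim]) (auto elim: eventually_mono)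
qed

lemma eventually_Gnp_prob_dense_set_le:
  fixes k t :: nat and \<alpha> :: real
  defines "p \<equiv> threshold_prob k" and "B \<equiv> \<lambda>n. \<alpha> * real t * ln_over_ln_ln n"
  assumes \<alpha>: "0 < \<alpha>"
  shows "\<forall>\<^sub>F n in sequentially.
    0 \<le> Gnp_prob n (p n) (has_dense_set n t (B n))
    \<and> Gnp_prob n (p n) (has_dense_set n t (B n)) \<le> (B n + 1) * exp (B n * ln (exp 2 * n * p n)) * (p n * B n) ^ t"
  using threshold_prob_eventually_bounds[of k]
proof eventually_elim
  case (elim n)
  moreover have "0 \<le> B n" using elim \<alpha> by (simp add: B_def)
  ultimately show ?case
    using Gnp_prob_nonneg Gnp_prob_dense_set_le[of "p n" n "B n" t] by (simp add: p_def)
qed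

theorem lemma5:
  fixes k t :: nat and \<alpha> :: real
  assumes "k \<ge> 1" and "t \<ge> 1" and "0 < \<alpha>" and "\<alpha> < 1"
  shows "(\<lambda>n. Gnp_prob n
            ((ln (real n) + (real k + 1) * ln (ln (real n)) - ln (ln (ln (real n)))) / real n)
            (\<lambda>E. \<exists>S. S \<subseteq> {0..<n} \<and>
                 real (card S) \<le> \<alpha> * real t * (ln (real n) / ln (ln (real n))) \<and>
                 induced_edges E S \<ge> card S + t))
         \<longlonglongrightarrow> 0"
proof -
  define p where "p = threshold_prob k"
  define B where "B n = \<alpha> * real t * ln_over_ln_ln n" for n
  define G where "G n = Gnp_prob n (p n) (has_dense_set n t (B n))" for n
  have bound: "\<forall>\<^sub>F n in sequentially.
      0 \<le> G n \<and> G n \<le> (B n + 1) * exp (B n * ln (exp 2 * n * p n)) * (p n * B n) ^ t"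
    unfolding G_def p_def B_def by (rule eventually_Gnp_prob_dense_set_le[OF assms(3)])
  have "G \<longlonglongrightarrow> 0"
  proof (rule tendsto_sandwich[OF _ _ tendsto_const])
    show "\<forall>\<^sub>F n in sequentially. 0 \<le> G n"
      using bound by (rule eventually_mono) blast
    show "\<forall>\<^sub>F n in sequentially. G n \<le> (B n + 1) * exp (B n * ln (exp 2 * n * p n)) * (p n * B n) ^ t"
      using bound by (rule eventually_mono) blast
    show "(\<lambda>n. (B n + 1) * exp (B n * ln (exp 2 * n * p n)) * (p n * B n) ^ t) \<longlonglongrightarrow> 0"
      unfolding p_def B_def by (rule dense_set_bound_tendsto_0[OF assms(2-4)])
  qed
  then show ?thesis
    unfolding G_def p_def B_def has_dense_set_def threshold_prob_def ln_over_ln_ln_def .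
qed

end
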